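(* For every cv-cycle type $\check{\lambda}$ and every integer $k\ge0$, the cv-cycle type colored Eulerian quasisymmetric function $Q_{\check{\lambda},k}$ is a symmetric function, i.e., it is invariant under every permutation of the variables $x_1,x_2,\dots$.
   Context: Fix a positive integer $l$ and commuting indeterminates $x_1,x_2,\dots$. Let $\mathcal{B}$ be the alphabet consisting of the letters $u^m$ ($u\ge1$, $0\le m\le l-1$) and the barred letters $\overline{u^0}$ ($u\ge1$). $u^m$ is $m$-colored and $\overline{u^0}$ is $0$-colored; both have absolute value $u$ and weight $x_u$. A colored necklace is a circular word over $\mathcal{B}$ (up to rotation, read clockwise) which is primitive (not a concatenation of $\ge2$ copies of a proper subword) and satisfies: (1) every barred letter is followed by a letter of lesser or equal absolute value; (2) every $0$-colored unbarred letter is followed by a letter of greater or equal absolute value; (3) a necklace of length one is not a single barred letter. A colored ornament is a finite multiset of colored necklaces, with weight the product of the weights of its letters. The color vector of a word or necklace is $(\beta_1,\dots,\beta_{l-1})$, where $\beta_m$ is the number of $m$-colored letters ($m\ge1$). A cv-cycle type is a finite multiset $\check{\lambda}=\{(\lambda_1,\vec{\beta^1}),\dots,(\lambda_i,\vec{\beta^i})\}$ with $\lambda_1\ge\dots\ge\lambda_i\ge1$ and $\vec{\beta^j}\in\mathbb{N}^{l-1}$; the cv-cycle type of an ornament is the multiset of pairs (length, color vector) of its necklaces. $Q_{\check{\lambda},k}$ is the sum of the weights of all colored ornaments of cv-cycle type $\check{\lambda}$ having exactly $k$ barred letters. (By Hyatt's colored ornament interpretation this coincides with the paper's definition $Q_{\check{\lambda},k}=\sum_\pi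 F_{n,\mathrm{DEX}(\pi)}$ over colored permutations of cv-cycle type $\check\lambda$ with $k$ excedances.) *)

theory Defs
  imports Main "HOL-Library.Multiset"
begin

type_synonym letter = "nat \<times> nat \<times> bool"

definition absv :: "letter \<Rightarrow> nat" where "absv a = fst a"
definition colr :: "letter \<Rightarrow> nat" where "colr a = fst (snd a)"
definition barred :: "letter \<Rightarrow> bool" where "barred a = snd (snd a)"

definition valid_letter :: "nat \<Rightarrow> letter \<Rightarrow> bool" where
  "valid_letter l a \<longleftrightarrow> absv a \<ge> 1 \<and> colr a < l \<and> (barred a \<longrightarrow> colr a = 0)"

definition primitive_word :: "'a list \<Rightarrow> bool" where
  "primitive_word w \<longleftrightarrow> w \<noteq> [] \<and> \<not> (\<exists>v d. d \<ge> 2 \<and> w = concat (replicate d v))"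

text \<open>Circular successor conditions (1)-(3) of a colored necklace, read on a representative word.\<close>
definition necklace_word :: "nat \<Rightarrow> letter list \<Rightarrow> bool" where
  "necklace_word l w \<longleftrightarrow>
     primitive_word w \<and> (\<forall>a\<in>set w. valid_letter l a) \<and>
     (\<forall>i<length w.
        (barred (w ! i) \<longrightarrow> absv (w ! ((i + 1) mod length w)) \<le> absv (w ! i)) \<and>
        (colr (w ! i) = 0 \<and> \<not> barred (w ! i) \<longrightarrow>
            absv (w ! i) \<le> absv (w ! ((i + 1) mod length w)))) \<and>
     (length w = 1 \<longrightarrow> \<not> barred (hd w))"

definition rot_class :: "'a list \<Rightarrow> 'a list set" where
  "rot_class w = {rotate i w | i. True}"

definition is_necklace :: "nat \<Rightarrow> letter list set \<Rightarrow> bool" where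
  "is_necklace l N \<longleftrightarrow> (\<exists>w. necklace_word l w \<and> N = rot_class w)"

definition rep :: "letter list set \<Rightarrow> letter list" where
  "rep N = (SOME w. w \<in> N)"

definition colvec :: "nat \<Rightarrow> letter list \<Rightarrow> nat list" where
  "colvec l w = map (\<lambda>m. length (filter (\<lambda>a. colr a = m) w)) [1..<l]"

definition ornament :: "nat \<Rightarrow> letter list set multiset \<Rightarrow> bool" where
  "ornament l Om \<longleftrightarrow> (\<forall>N\<in>#Om. is_necklace l N)"

definition cv_type :: "nat \<Rightarrow> letter list set multiset \<Rightarrow> (nat \<times> nat list) multiset" where
  "cv_type l Om = image_mset (\<lambda>N. (length (rep N), colvec l (rep N))) Om"

definition num_barred :: "letter list set multiset \<Rightarrow> nat" where
  "num_barred Om = sum_mset (image_mset (\<lambda>N. length (filter barred (rep N))) Om)"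

text \<open>Exponent vector of the weight: x_u appears with exponent content Om u.\<close>
definition content :: "letter list set multiset \<Rightarrow> nat \<Rightarrow> nat" where
  "content Om u = sum_mset (image_mset (\<lambda>N. length (filter (\<lambda>a. absv a = u) (rep N))) Om)"

text \<open>Coefficient of the monomial prod_u x_u^(alpha u) in Q_{lambda,k}.\<close>
definition Q_coeff :: "nat \<Rightarrow> (nat \<times> nat list) multiset \<Rightarrow> nat \<Rightarrow> (nat \<Rightarrow> nat) \<Rightarrow> nat" where
  "Q_coeff l lam k \<alpha> =
     card {Om. ornament l Om \<and> cv_type l Om = lam \<and> num_barred Om = k \<and> content Om = \<alpha>}"

end

theory Submission
  imports Defs "HOL-Combinatorics.Transposition"
begin

text \<open>It suffices to show invariance under each adjacent transposition \<open>(i i+1)\<close> with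
  \<open>i \<ge> 1\<close>: the content of an ornament has finite support, on which a bijection fixing \<open>0\<close>
  agrees with a finite product of transpositions of positive integers, and these are
  conjugates of adjacent ones.

  For \<open>(i i+1)\<close> there is a content-swapping involution on necklaces. Call a letter active if
  its absolute value is \<open>i\<close> or \<open>i + 1\<close>, and two consecutive letters linked if both are active
  and the first is \<open>0\<close>-colored. Cut the necklace at a junction that is not a link and split it
  into maximal linked blocks; in each block reverse the sequence of absolute values while
  exchanging \<open>i\<close> and \<open>i + 1\<close>, keep the colors in place, and reverse the bars of all positions
  but the last. This preserves conditions (1)-(3), primitivity, the length, the color vector
  and the number of bars, exchanges the multiplicities of \<open>i\<close> and \<open>i + 1\<close>, and is an
  involution; applied to every necklace it matches the ornaments of content \<open>\<alpha>\<close> with those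
  of content \<open>\<alpha> \<circ> (i i+1)\<close>.\<close>

section \<open>Cyclic words\<close>

lemma successively_cyclic_iff:
  assumes "xs \<noteq> []"
  shows "(\<forall>j<length xs. P (xs ! j) (xs ! ((j + 1) mod length xs))) \<longleftrightarrow>
         successively P xs \<and> P (last xs) (hd xs)"
proof
  assume cyc: "\<forall>j<length xs. P (xs ! j) (xs ! ((j + 1) mod length xs))"
  have "successively P xs"
    unfolding successively_conv_nth using cyc by (metis Suc_eq_plus1 Suc_lessD mod_less)
  moreover have "P (last xs) (hd xs)"
    using cyc[rule_format, of "length xs - 1"] assms by (simp add: last_conv_nth hd_conv_nth)
  ultimately show "successively P xs \<and> P (last xs) (hd xs)" ..
next
  assume lin: "successively P xs \<and> P (last xs) (hd xs)"
  show "\<forall>j<length xs. P (xs ! j) (xs ! ((j + 1) mod length xs))"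
  proof (intro allI impI)
    fix j assume j: "j < length xs"
    show "P (xs ! j) (xs ! ((j + 1) mod length xs))"
    proof (cases "Suc j < length xs")
      case True
      then show ?thesis using lin successively_nth[of P xs j] by simp
    next
      case False
      then have "j = length xs - 1" "Suc j = length xs" using j by auto
      then show ?thesis using lin assms by (simp add: last_conv_nth hd_conv_nth)
    qed
  qed
qed

lemma cyclic_rotate:
  assumes "\<forall>j<length xs. P (xs ! j) (xs ! ((j + 1) mod length xs))"
  shows "\<forall>j<length xs. P (rotate k xs ! j) (rotate k xs ! ((j + 1) mod length xs))"
proof (intro allI impI)
  let ?n = "length xs"
  fix j assume j: "j < ?n"
  then have n: "0 < ?n" by linarith
  have "rotate k xs ! ((j + 1) mod ?n) = xs ! ((k + (j + 1) mod ?n) mod ?n)"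
    using n by (intro nth_rotate) simp
  moreover have "(k + (j + 1) mod ?n) mod ?n = ((k + j) mod ?n + 1) mod ?n"
    by (simp add: mod_add_right_eq mod_add_left_eq add.assoc mod_Suc_eq)
  moreover have "P (xs ! ((k + j) mod ?n)) (xs ! (((k + j) mod ?n + 1) mod ?n))"
    using assms n by simp
  ultimately show "P (rotate k xs ! j) (rotate k xs ! ((j + 1) mod ?n))"
    using j by (simp add: nth_rotate)
qed

lemma last_concat: "xss \<noteq> [] \<Longrightarrow> last xss \<noteq> [] \<Longrightarrow> last (concat xss) = last (last xss)"
  by (induction xss rule: rev_induct) auto

lemma successively_concat_iff:
  assumes "\<forall>xs\<in>set xss. xs \<noteq> []"
  shows "successively P (concat xss) \<longleftrightarrow>
    (\<forall>xs\<in>set xss. successively P xs) \<and> successively (\<lambda>xs ys. P (last xs) (hd ys)) xss"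
  using assms
proof (induction xss)
  case (Cons xs xss)
  show ?case
  proof (cases xss)
    case (Cons ys yss)
    then have "hd (concat xss) = hd ys" "concat xss \<noteq> []" using Cons.prems by auto
    then show ?thesis using Cons.IH Cons.prems \<open>xss = ys # yss\<close>
      by (auto simp: successively_append_iff)
  qed simp
qed simp

lemma rotate_inverse_exists: "\<exists>m. rotate m (rotate k xs) = xs"
proof (cases "xs = []")
  case False
  let ?n = "length xs"
  have "k mod ?n < ?n" using False by simp
  then have "?n - k mod ?n + k = ?n + ?n * (k div ?n)"
    using mult_div_mod_eq[of ?n k] by linarith
  then have "(?n - k mod ?n + k) mod ?n = 0" by simp
  then show ?thesis by (intro exI[of _ "?n - k mod ?n"]) (simp add: rotate_rotate)
qed simp

lemma length_filter_rotate: "length (filter P (rotate k xs)) = length (filter P xs)"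
  by (metis append_take_drop_id filter_append length_append add.commute rotate_drop_take)

lemma concat_replicate_snoc_hd:
  "xs \<noteq> [] \<Longrightarrow> concat (replicate d xs) @ [hd xs] = hd xs # concat (replicate d (rotate1 xs))"
  by (induction d) (auto simp: rotate1_hd_tl)

lemma rotate_concat_replicate:
  "rotate k (concat (replicate d xs)) = concat (replicate d (rotate k xs))"
proof (induction k)
  case (Suc k)
  have "rotate1 (concat (replicate d ys)) = concat (replicate d (rotate1 ys))" for ys :: "'a list"
  proof (cases "ys = [] \<or> d = 0")
    case False
    then obtain d' where "d = Suc d'" "ys \<noteq> []" by (cases d) auto
    then show ?thesis
      using concat_replicate_snoc_hd[of ys d'] by (simp add: rotate1_hd_tl)
  qed auto
  then show ?case using Suc by simp
qed simp

lemma primitive_word_rotate: "primitive_word xs \<Longrightarrow> primitive_word (rotate k xs)"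
  unfolding primitive_word_def
proof (intro conjI notI)
  assume prim: "xs \<noteq> [] \<and> \<not> (\<exists>v d. 2 \<le> d \<and> xs = concat (replicate d v))"
  then show "rotate k xs = [] \<Longrightarrow> False" by simp
  assume "\<exists>v d. 2 \<le> d \<and> rotate k xs = concat (replicate d v)"
  then obtain v d where "2 \<le> d" "rotate k xs = concat (replicate d v)" by blast
  moreover obtain m where "rotate m (rotate k xs) = xs" using rotate_inverse_exists by blast
  ultimately show False using prim by (metis rotate_concat_replicate)
qed

lemma rot_class_rotate: "rot_class (rotate k xs) = rot_class xs"
proof
  show "rot_class (rotate k xs) \<subseteq> rot_class xs"
    unfolding rot_class_def by (auto simp: rotate_rotate)
  obtain m where m: "rotate m (rotate k xs) = xs" using rotate_inverse_exists by blast
  show "rot_class xs \<subseteq> rot_class (rotate k xs)"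
    unfolding rot_class_def by (auto, metis m rotate_rotate)
qed

lemma self_in_rot_class: "xs \<in> rot_class xs"
  unfolding rot_class_def by (metis (mono_tags) CollectI id_apply rotate0)

definition succ_ok :: "letter \<Rightarrow> letter \<Rightarrow> bool" where
  "succ_ok a b \<longleftrightarrow>
     (barred a \<longrightarrow> absv b \<le> absv a) \<and> (colr a = 0 \<and> \<not> barred a \<longrightarrow> absv a \<le> absv b)"

lemma necklace_word_cyclic_iff:
  "necklace_word l w \<longleftrightarrow> primitive_word w \<and> (\<forall>a\<in>set w. valid_letter l a) \<and>
     (\<forall>j<length w. succ_ok (w ! j) (w ! ((j + 1) mod length w))) \<and>
     (length w = 1 \<longrightarrow> \<not> barred (hd w))"
  unfolding necklace_word_def succ_ok_def by simp

lemma necklace_word_iff: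
  "necklace_word l w \<longleftrightarrow> primitive_word w \<and> (\<forall>a\<in>set w. valid_letter l a) \<and>
     successively succ_ok w \<and> succ_ok (last w) (hd w) \<and> (length w = 1 \<longrightarrow> \<not> barred (hd w))"
proof -
  have "primitive_word w \<Longrightarrow> w \<noteq> []" by (simp add: primitive_word_def)
  then show ?thesis
    unfolding necklace_word_cyclic_iff using successively_cyclic_iff[of w succ_ok] by blast
qed

lemma necklace_word_rotate: "necklace_word l w \<Longrightarrow> necklace_word l (rotate k w)"
  unfolding necklace_word_cyclic_iff
  using cyclic_rotate[of w succ_ok k] primitive_word_rotate[of w k] by auto

lemma necklace_word_nonempty: "necklace_word l w \<Longrightarrow> w \<noteq> []"
  by (simp add: necklace_word_def primitive_word_def)

section \<open>Flipping a linked block\<close>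

lemma map_zip_letters:
  assumes "length us = length ms" "length ms = length bs"
  shows "map absv (zip us (zip ms bs)) = us" "map colr (zip us (zip ms bs)) = ms"
        "map barred (zip us (zip ms bs)) = bs"
  using assms
  by (induction us ms bs rule: list_induct3) (auto simp: absv_def colr_def barred_def)

lemma letter_list_eqI:
  assumes "map absv y = map absv z" "map colr y = map colr z" "map barred y = map barred z"
  shows "y = z"
proof -
  have rebuild: "zip (map absv c) (zip (map colr c) (map barred c)) = c" for c
    by (induction c) (auto simp: absv_def colr_def barred_def)
  have "y = zip (map absv y) (zip (map colr y) (map barred y))" by (rule rebuild[symmetric])
  also have "\<dots> = z" using assms by (simp add: rebuild)
  finally show ?thesis .
qed

abbreviation flip :: "nat \<Rightarrow> nat \<Rightarrow> nat" where
  "flip i \<equiv> transpose i (Suc i)"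

lemma flip_le_flip_iff:
  "u \<in> {i, Suc i} \<Longrightarrow> v \<in> {i, Suc i} \<Longrightarrow> flip i u \<le> flip i v \<longleftrightarrow> v \<le> u"
  by (auto simp: transpose_def)

lemma transpose_eq_iff_eq_transpose: "transpose a b u = v \<longleftrightarrow> u = transpose a b v"
  by (auto simp: transpose_def)

definition active :: "nat \<Rightarrow> letter \<Rightarrow> bool" where
  "active i a \<longleftrightarrow> absv a = i \<or> absv a = Suc i"

definition linked :: "nat \<Rightarrow> letter \<Rightarrow> letter \<Rightarrow> bool" where
  "linked i a b \<longleftrightarrow> active i a \<and> colr a = 0 \<and> active i b"

lemma active_flip_letter: "active i (flip i (absv a), m, b) \<longleftrightarrow> active i a"
  by (auto simp: active_def absv_def transpose_def)

definition block_flip :: "nat \<Rightarrow> letter list \<Rightarrow> letter list" where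
  "block_flip i c = zip (map (flip i) (rev (map absv c)))
     (zip (map colr c) (rev (butlast (map barred c)) @ [last (map barred c)]))"

lemma length_block_flip [simp]: "length (block_flip i c) = length c"
  by (cases "c = []") (auto simp: block_flip_def)

lemma block_flip_Nil_iff [simp]: "block_flip i c = [] \<longleftrightarrow> c = []"
  by (metis length_block_flip length_0_conv)

lemma nth_block_flip:
  assumes "j < length c"
  shows "block_flip i c ! j = (flip i (absv (c ! (length c - 1 - j))), colr (c ! j),
     if j < length c - 1 then barred (c ! (length c - 2 - j)) else barred (c ! (length c - 1)))"
proof -
  have "c \<noteq> []" using assms by auto
  then have "last (map barred c) = barred (c ! (length c - 1))"
    by (simp add: last_map last_conv_nth)
  then show ?thesis using assms
    by (auto simp: block_flip_def rev_nth nth_append nth_butlast)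
qed

lemma map_absv_block_flip: "map absv (block_flip i c) = map (flip i) (rev (map absv c))"
  by (cases "c = []") (auto simp: block_flip_def intro!: map_zip_letters)

lemma map_colr_block_flip: "map colr (block_flip i c) = map colr c"
  by (cases "c = []") (auto simp: block_flip_def intro!: map_zip_letters)

lemma map_barred_block_flip:
  "c \<noteq> [] \<Longrightarrow> map barred (block_flip i c) = rev (butlast (map barred c)) @ [last (map barred c)]"
  by (auto simp: block_flip_def intro!: map_zip_letters)

lemma block_flip_block_flip: "c \<noteq> [] \<Longrightarrow> block_flip i (block_flip i c) = c"
proof (rule letter_list_eqI)
  assume c: "c \<noteq> []"
  then show "map barred (block_flip i (block_flip i c)) = map barred c"
    by (simp add: map_barred_block_flip butlast_append last_map)
       (metis append_butlast_last_id last_map map_butlast map_is_Nil_conv)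
qed (simp_all add: map_absv_block_flip map_colr_block_flip rev_map)

lemma last_block_flip:
  "c \<noteq> [] \<Longrightarrow> last (block_flip i c) = (flip i (absv (hd c)), colr (last c), barred (last c))"
  using nth_block_flip[of "length c - 1" c i]
  by (simp add: last_conv_nth[of "block_flip i c"] last_conv_nth[of c] hd_conv_nth)

lemma hd_block_flip:
  "c \<noteq> [] \<Longrightarrow> hd (block_flip i c) = (flip i (absv (last c)), colr (hd c),
     if 1 < length c then barred (c ! (length c - 2)) else barred (c ! 0))"
  using nth_block_flip[of 0 c i]
  by (auto simp: last_conv_nth hd_conv_nth[of "block_flip i c"] hd_conv_nth[of c])

lemma block_flip_singleton_inactive: "\<not> active i a \<Longrightarrow> block_flip i [a] = [a]"
  by (cases a) (auto simp: block_flip_def active_def absv_def colr_def barred_def)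

lemma length_filter_absv_block_flip:
  "length (filter (\<lambda>a. absv a = u) (block_flip i c)) = length (filter (\<lambda>a. absv a = flip i u) c)"
proof -
  have "length (filter (\<lambda>a. absv a = u) (block_flip i c))
      = length (filter (\<lambda>v. v = u) (map absv (block_flip i c)))"
    by (simp add: filter_map comp_def)
  also have "\<dots> = length (filter (\<lambda>v. v = flip i u) (map absv c))"
    by (simp add: map_absv_block_flip filter_map comp_def rev_filter[symmetric]
        transpose_eq_iff_eq_transpose)
  finally show ?thesis by (simp add: filter_map comp_def)
qed

lemma length_filter_barred_block_flip:
  "c \<noteq> [] \<Longrightarrow> length (filter barred (block_flip i c)) = length (filter barred c)"
proof -
  assume c: "c \<noteq> []"
  have "length (filter barred w) = length (filter id (map barred w))" for w
    by (simp add: filter_map comp_def)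
  moreover have "length (filter id (map barred c))
      = length (filter id (butlast (map barred c) @ [last (map barred c)]))"
    using c by simp
  ultimately show ?thesis
    by (simp only: map_barred_block_flip[OF c]) (simp add: rev_filter[symmetric])
qed

lemma linked_block_cases:
  assumes "c \<noteq> []" "successively (linked i) c"
  obtains a where "c = [a]"
  | "\<forall>a\<in>set c. active i a" "\<forall>j < length c - 1. colr (c ! j) = 0"
proof (cases "length c = 1")
  case True
  then show ?thesis using that(1) by (cases c) auto
next
  case False
  moreover have "length c \<noteq> 0" using assms(1) by simp
  ultimately have two: "2 \<le> length c" by linarith
  have link: "\<And>j. Suc j < length c \<Longrightarrow> linked i (c ! j) (c ! Suc j)"
    using assms(2) successively_nth by blast
  have "active i (c ! j)" if "j < length c" for j
  proof (cases j)
    case 0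
    then show ?thesis using link[of 0] two by (simp add: linked_def)
  next
    case (Suc j')
    then show ?thesis using link[of j'] that by (simp add: linked_def)
  qed
  then have "\<forall>a\<in>set c. active i a" by (metis in_set_conv_nth)
  moreover have "\<forall>j < length c - 1. colr (c ! j) = 0"
    using link by (auto simp: linked_def)
  ultimately show ?thesis using that(2) by blast
qed

lemma linked_block_flip:
  assumes "c \<noteq> []" "successively (linked i) c"
  shows "successively (linked i) (block_flip i c)"
  using assms
proof (cases rule: linked_block_cases)
  case 1
  then show ?thesis by (auto simp: block_flip_def)
next
  case 2
  show ?thesis unfolding successively_conv_nth
  proof (intro allI impI)
    fix j assume j: "Suc j < length (block_flip i c)"
    have "active i (c ! (length c - 1 - j))" "active i (c ! (length c - 1 - Suc j))"
      "colr (c ! j) = 0"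
      using 2 j by auto
    then show "linked i (block_flip i c ! j) (block_flip i c ! Suc j)"
      using j nth_block_flip[of j c i] nth_block_flip[of "Suc j" c i]
      by (simp add: linked_def active_flip_letter colr_def)
  qed
qed

text \<open>Flipping a linked block changes its last letter at most in an active absolute value,
  and its first letter only if that letter is active and stays active. Linkage and the
  successor condition at a junction between blocks cannot see such changes.\<close>
definition last_compatible :: "nat \<Rightarrow> letter \<Rightarrow> letter \<Rightarrow> bool" where
  "last_compatible i a' a \<longleftrightarrow> active i a' = active i a \<and> colr a' = colr a \<and>
     barred a' = barred a \<and> (\<not> active i a \<longrightarrow> a' = a)"

definition hd_compatible :: "nat \<Rightarrow> letter \<Rightarrow> letter \<Rightarrow> bool" where
  "hd_compatible i b' b \<longleftrightarrow> active i b' = active i b \<and> (\<not> active i b \<longrightarrow> b' = b)"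

lemma last_compatible_block_flip:
  assumes "c \<noteq> []" "successively (linked i) c"
  shows "last_compatible i (last (block_flip i c)) (last c)"
  using assms
proof (cases rule: linked_block_cases)
  case (1 a)
  then have "last (block_flip i c) = (flip i (absv a), colr a, barred a)"
    by (simp add: last_block_flip)
  moreover have "active i (flip i (absv a), colr a, barred a) \<longleftrightarrow> active i a"
    by (rule active_flip_letter)
  ultimately show ?thesis using 1 block_flip_singleton_inactive[of i a]
    by (auto simp: last_compatible_def colr_def barred_def)
next
  case 2
  then have "active i (hd c)" "active i (last c)" using assms(1) by auto
  then show ?thesis using assms(1)
    by (auto simp: last_compatible_def last_block_flip colr_def barred_def active_def absv_def
        transpose_def)
qed

lemma hd_compatible_block_flip:
  assumes "c \<noteq> []" "successively (linked i) c"
  shows "hd_compatible i (hd (block_flip i c)) (hd c)"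
  using assms
proof (cases rule: linked_block_cases)
  case (1 a)
  then have "hd (block_flip i c) = (flip i (absv a), colr a, barred a)"
    by (simp add: hd_block_flip)
  moreover have "active i (flip i (absv a), colr a, barred a) \<longleftrightarrow> active i a"
    by (rule active_flip_letter)
  ultimately show ?thesis using 1 block_flip_singleton_inactive[of i a]
    by (auto simp: hd_compatible_def)
next
  case 2
  then have "active i (hd c)" "active i (last c)" using assms(1) by auto
  then show ?thesis using assms(1)
    by (auto simp: hd_compatible_def hd_block_flip active_def absv_def transpose_def)
qed

lemma linked_compatible:
  "last_compatible i a' a \<Longrightarrow> hd_compatible i b' b \<Longrightarrow> linked i a' b' = linked i a b"
  by (auto simp: linked_def last_compatible_def hd_compatible_def)

lemma succ_ok_compatible:
  assumes "\<not> linked i a b" "succ_ok a b" "barred a \<longrightarrow> colr a = 0"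
    and "last_compatible i a' a" "hd_compatible i b' b"
  shows "succ_ok a' b'"
proof (cases "active i a")
  case False
  then have "a' = a" using assms(4) by (simp add: last_compatible_def)
  show ?thesis
  proof (cases "active i b")
    case False
    then show ?thesis using \<open>a' = a\<close> assms(2,5) by (simp add: hd_compatible_def)
  next
    case True
    then have "active i b'" using assms(5) by (simp add: hd_compatible_def)
    then show ?thesis using True \<open>a' = a\<close> \<open>\<not> active i a\<close> assms(2)
      unfolding succ_ok_def active_def by auto
  qed
next
  case True
  then have a': "active i a'" "colr a' = colr a" "barred a' = barred a"
    using assms(4) by (auto simp: last_compatible_def)
  show ?thesis
  proof (cases "active i b")
    case False
    then have "b' = b" using assms(5) by (simp add: hd_compatible_def)
    then show ?thesis using True False a' assms(2) unfolding succ_ok_def active_def by auto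
  next
    case True
    then have "colr a \<noteq> 0" using assms(1) \<open>active i a\<close> by (simp add: linked_def)
    then show ?thesis using a' assms(3) unfolding succ_ok_def by auto
  qed
qed

lemma successively_succ_ok_block_flip:
  assumes "c \<noteq> []" "successively (linked i) c" "successively succ_ok c"
  shows "successively succ_ok (block_flip i c)"
  unfolding successively_conv_nth
proof (intro allI impI)
  fix j assume "Suc j < length (block_flip i c)"
  then have j: "Suc j < length c" by simp
  obtain "\<forall>a\<in>set c. active i a" "\<forall>j < length c - 1. colr (c ! j) = 0"
    using assms(1,2) by (cases rule: linked_block_cases) (use j in auto)
  define p where "p = length c - 2 - j"
  have p: "Suc p < length c" "length c - 1 - j = Suc p" "length c - 1 - Suc j = p"
    using j by (auto simp: p_def)
  have "succ_ok (c ! p) (c ! Suc p)" using assms(3) p(1) successively_nth by blast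
  moreover have "active i (c ! p)" "active i (c ! Suc p)" "colr (c ! p) = 0" "colr (c ! j) = 0"
    using \<open>\<forall>a\<in>set c. active i a\<close> \<open>\<forall>j < length c - 1. colr (c ! j) = 0\<close> p j by auto
  ultimately show "succ_ok (block_flip i c ! j) (block_flip i c ! Suc j)"
    using nth_block_flip[of j c i] nth_block_flip[of "Suc j" c i] j p
    by (auto simp: p_def succ_ok_def absv_def colr_def barred_def active_def
        flip_le_flip_iff)
qed

lemma succ_ok_last_hd_block_flip:
  assumes "c \<noteq> []" "\<forall>a\<in>set c. active i a" "succ_ok (last c) (hd c)"
  shows "succ_ok (last (block_flip i c)) (hd (block_flip i c))"
proof -
  have "active i (hd c)" "active i (last c)" using assms by auto
  then show ?thesis using assms(3)
    unfolding last_block_flip[OF assms(1)] hd_block_flip[OF assms(1)]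
    by (auto simp: succ_ok_def absv_def colr_def barred_def active_def flip_le_flip_iff)
qed

section \<open>Flipping a word block by block\<close>

fun blocks :: "nat \<Rightarrow> letter list \<Rightarrow> letter list list" where
  "blocks i [] = []"
| "blocks i [a] = [[a]]"
| "blocks i (a # b # cs) =
     (if linked i a b then (case blocks i (b # cs) of c # bs \<Rightarrow> (a # c) # bs | [] \<Rightarrow> [[a]])
      else [a] # blocks i (b # cs))"

definition block_decomp :: "nat \<Rightarrow> letter list list \<Rightarrow> bool" where
  "block_decomp i cs \<longleftrightarrow> (\<forall>c\<in>set cs. c \<noteq> [] \<and> successively (linked i) c) \<and>
     successively (\<lambda>c d. \<not> linked i (last c) (hd d)) cs"

lemma concat_blocks [simp]: "concat (blocks i x) = x"
proof (induction i x rule: blocks.induct)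
  case (3 i a b cs)
  then show ?case by (cases "blocks i (b # cs)") auto
qed auto

lemma blocks_Nil_iff [simp]: "blocks i x = [] \<longleftrightarrow> x = []"
  by (metis concat.simps(1) blocks.simps(1) concat_blocks)

lemma block_decomp_blocks: "block_decomp i (blocks i x)"
proof (induction i x rule: blocks.induct)
  case (3 i a b cs)
  obtain c bs where e: "blocks i (b # cs) = c # bs"
    by (cases "blocks i (b # cs)") auto
  have "block_decomp i (c # bs)" using 3 e by (cases "linked i a b") simp_all
  moreover from this have "c \<noteq> []" by (simp add: block_decomp_def)
  moreover from this have "hd c = b" using concat_blocks[of i "b # cs"] e by (cases c) auto
  ultimately show ?case using e by (auto simp: block_decomp_def successively_Cons)
qed (auto simp: block_decomp_def)

lemma blocks_nonempty: "c \<in> set (blocks i x) \<Longrightarrow> c \<noteq> []"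
  using block_decomp_blocks[of i x] by (auto simp: block_decomp_def)

lemma blocks_linked: "c \<in> set (blocks i x) \<Longrightarrow> successively (linked i) c"
  using block_decomp_blocks[of i x] by (auto simp: block_decomp_def)

lemma hd_hd_blocks: "x \<noteq> [] \<Longrightarrow> hd (hd (blocks i x)) = hd x"
  by (metis blocks_Nil_iff blocks_nonempty concat_blocks hd_concat hd_in_set)

lemma last_last_blocks: "x \<noteq> [] \<Longrightarrow> last (last (blocks i x)) = last x"
  by (metis blocks_Nil_iff blocks_nonempty concat_blocks last_concat last_in_set)

lemma blocks_Cons_block:
  assumes "c \<noteq> []" "successively (linked i) c" "x = [] \<or> \<not> linked i (last c) (hd x)"
  shows "blocks i (c @ x) = c # blocks i x"
  using assms
proof (induction c)
  case (Cons a c)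
  show ?case
  proof (cases c)
    case Nil
    then show ?thesis using Cons by (cases x) auto
  next
    case (Cons b c')
    then show ?thesis using Cons.IH Cons.prems by (auto simp: successively_Cons)
  qed
qed simp

lemma blocks_concat: "block_decomp i cs \<Longrightarrow> blocks i (concat cs) = cs"
proof (induction cs)
  case (Cons c cs)
  then have c: "c \<noteq> []" "successively (linked i) c" and cs: "block_decomp i cs"
    by (auto simp: block_decomp_def successively_Cons)
  have "concat cs = [] \<or> \<not> linked i (last c) (hd (concat cs))"
  proof (cases cs)
    case (Cons d ds)
    then have "d \<noteq> []" using cs by (auto simp: block_decomp_def)
    then show ?thesis using Cons.prems \<open>cs = d # ds\<close> by (auto simp: block_decomp_def)
  qed simp
  then show ?case using blocks_Cons_block[OF c] Cons.IH[OF cs] by simp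
qed simp

lemma blocks_append:
  assumes "x \<noteq> []" "y \<noteq> []" "\<not> linked i (last x) (hd y)"
  shows "blocks i (x @ y) = blocks i x @ blocks i y"
proof -
  have "block_decomp i (blocks i x @ blocks i y)"
    using block_decomp_blocks[of i x] block_decomp_blocks[of i y] assms
    by (auto simp: block_decomp_def successively_append_iff hd_hd_blocks last_last_blocks)
  from blocks_concat[OF this] show ?thesis by simp
qed

lemma block_decomp_map_block_flip: "block_decomp i cs \<Longrightarrow> block_decomp i (map (block_flip i) cs)"
proof -
  assume dec: "block_decomp i cs"
  have "successively (\<lambda>c d. \<not> linked i (last (block_flip i c)) (hd (block_flip i d))) cs"
    using dec unfolding block_decomp_def
  proof (elim conjE successively_mono)
    fix c d assume "\<forall>c\<in>set cs. c \<noteq> [] \<and> successively (linked i) c"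
      and "c \<in> set cs" "d \<in> set cs" "\<not> linked i (last c) (hd d)"
    then show "\<not> linked i (last (block_flip i c)) (hd (block_flip i d))"
      using linked_compatible[OF last_compatible_block_flip hd_compatible_block_flip] by metis
  qed
  then show ?thesis using dec linked_block_flip
    by (auto simp: block_decomp_def successively_map)
qed

definition word_flip :: "nat \<Rightarrow> letter list \<Rightarrow> letter list" where
  "word_flip i x = concat (map (block_flip i) (blocks i x))"

lemma word_flip_append:
  "x \<noteq> [] \<Longrightarrow> y \<noteq> [] \<Longrightarrow> \<not> linked i (last x) (hd y) \<Longrightarrow>
     word_flip i (x @ y) = word_flip i x @ word_flip i y"
  by (simp add: word_flip_def blocks_append)

lemma blocks_word_flip: "blocks i (word_flip i x) = map (block_flip i) (blocks i x)"
  unfolding word_flip_def by (rule blocks_concat[OF block_decomp_map_block_flip[OF block_decomp_blocks]])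

lemma word_flip_word_flip [simp]: "word_flip i (word_flip i x) = x"
proof -
  have "word_flip i (word_flip i x) = concat (map (block_flip i \<circ> block_flip i) (blocks i x))"
    by (simp add: word_flip_def[of i "word_flip i x"] blocks_word_flip)
  also have "\<dots> = concat (blocks i x)"
    using blocks_nonempty[of _ i x] by (simp add: block_flip_block_flip cong: map_cong)
  finally show ?thesis by simp
qed

lemma map_colr_word_flip: "map colr (word_flip i x) = map colr x"
  by (metis (no_types, lifting) concat_blocks map_colr_block_flip map_concat map_map comp_def
      word_flip_def map_cong)

lemma length_word_flip [simp]: "length (word_flip i x) = length x"
  by (metis length_map map_colr_word_flip)

lemma word_flip_Nil_iff [simp]: "word_flip i x = [] \<longleftrightarrow> x = []"
  by (metis length_word_flip length_0_conv)

lemma length_filter_absv_word_flip: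
  "length (filter (\<lambda>a. absv a = u) (word_flip i x)) = length (filter (\<lambda>a. absv a = flip i u) x)"
proof -
  have "length (filter (\<lambda>a. absv a = u) (concat (map (block_flip i) cs)))
      = length (filter (\<lambda>a. absv a = flip i u) (concat cs))" for cs
    by (induction cs) (simp_all add: length_filter_absv_block_flip)
  then show ?thesis unfolding word_flip_def by (metis concat_blocks)
qed

lemma length_filter_barred_word_flip:
  "length (filter barred (word_flip i x)) = length (filter barred x)"
proof -
  have "\<forall>c\<in>set cs. c \<noteq> [] \<Longrightarrow>
      length (filter barred (concat (map (block_flip i) cs))) = length (filter barred (concat cs))" for cs
    by (induction cs) (simp_all add: length_filter_barred_block_flip)
  then show ?thesis unfolding word_flip_def using blocks_nonempty by (metis concat_blocks)
qed

lemma colvec_word_flip: "colvec l (word_flip i x) = colvec l x"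
proof -
  have "length (filter (\<lambda>a. colr a = m) (word_flip i x)) = length (filter (\<lambda>a. colr a = m) x)"
    for m
    using arg_cong[OF map_colr_word_flip, of "\<lambda>cs. length (filter (\<lambda>c. c = m) cs)"]
    by (simp add: filter_map comp_def)
  then show ?thesis by (simp add: colvec_def)
qed

section \<open>The flip on necklace words\<close>

definition all_linked :: "nat \<Rightarrow> letter list \<Rightarrow> bool" where
  "all_linked i x \<longleftrightarrow> (\<forall>a\<in>set x. active i a \<and> colr a = 0)"

text \<open>If a word is cut at a junction that is not a link (or is one cyclically linked block),
  its maximal linked blocks are those of the necklace read cyclically; hence the flips of two
  such rotations of a word are rotations of each other.\<close>
definition good_cut :: "nat \<Rightarrow> letter list \<Rightarrow> bool" where
  "good_cut i x \<longleftrightarrow> x \<noteq> [] \<and> (\<not> linked i (last x) (hd x) \<or> all_linked i x)"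

lemma word_flip_all_linked: "all_linked i x \<Longrightarrow> x \<noteq> [] \<Longrightarrow> word_flip i x = block_flip i x"
  using blocks_Cons_block[of x i "[]"]
  by (auto simp: word_flip_def all_linked_def successively_conv_nth linked_def)

lemma all_linked_block_flip: "all_linked i x \<Longrightarrow> all_linked i (block_flip i x)"
  unfolding all_linked_def
proof
  fix a assume al: "\<forall>a\<in>set x. active i a \<and> colr a = 0" and "a \<in> set (block_flip i x)"
  then obtain j where j: "j < length x" "a = block_flip i x ! j" by (auto simp: in_set_conv_nth)
  have "active i (x ! (length x - 1 - j))" "colr (x ! j) = 0" using al j by auto
  then show "active i a \<and> colr a = 0" using j nth_block_flip[of j x i]
    by (auto simp: active_def absv_def colr_def transpose_def)
qed

lemma last_word_flip:
  assumes "x \<noteq> []"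
  shows "last (word_flip i x) = last (block_flip i (last (blocks i x)))"
proof -
  have "last (blocks i x) \<noteq> []" using assms blocks_nonempty[of "last (blocks i x)" i x] by simp
  then show ?thesis unfolding word_flip_def using assms by (simp add: last_concat last_map)
qed

lemma hd_word_flip:
  assumes "x \<noteq> []"
  shows "hd (word_flip i x) = hd (block_flip i (hd (blocks i x)))"
proof -
  have "hd (blocks i x) \<noteq> []" using assms blocks_nonempty[of "hd (blocks i x)" i x] by simp
  then show ?thesis unfolding word_flip_def using assms by (simp add: hd_concat hd_map)
qed

lemma last_compatible_word_flip:
  assumes "x \<noteq> []"
  shows "last_compatible i (last (word_flip i x)) (last x)"
proof -
  have c: "last (blocks i x) \<in> set (blocks i x)" using assms by simp
  show ?thesis using last_compatible_block_flip[OF blocks_nonempty[OF c] blocks_linked[OF c]] assms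
    by (simp add: last_word_flip last_last_blocks)
qed

lemma hd_compatible_word_flip:
  assumes "x \<noteq> []"
  shows "hd_compatible i (hd (word_flip i x)) (hd x)"
proof -
  have c: "hd (blocks i x) \<in> set (blocks i x)" using assms by simp
  show ?thesis using hd_compatible_block_flip[OF blocks_nonempty[OF c] blocks_linked[OF c]] assms
    by (simp add: hd_word_flip hd_hd_blocks)
qed

lemma good_cut_word_flip:
  assumes "good_cut i x"
  shows "good_cut i (word_flip i x)"
proof (cases "all_linked i x")
  case True
  then show ?thesis using assms all_linked_block_flip
    by (simp add: good_cut_def word_flip_all_linked)
next
  case False
  then have "x \<noteq> []" "\<not> linked i (last x) (hd x)" using assms by (auto simp: good_cut_def)
  then show ?thesis
    using linked_compatible[OF last_compatible_word_flip hd_compatible_word_flip]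
    by (simp add: good_cut_def)
qed

lemma successively_succ_ok_word_flip:
  assumes "\<forall>a\<in>set x. barred a \<longrightarrow> colr a = 0" "successively succ_ok x"
  shows "successively succ_ok (word_flip i x)"
proof -
  define cs where "cs = blocks i x"
  have ne: "\<forall>c\<in>set cs. c \<noteq> []" and lk: "\<forall>c\<in>set cs. successively (linked i) c"
    by (auto simp: cs_def blocks_nonempty blocks_linked)
  have x: "concat cs = x" by (simp add: cs_def)
  have inner: "\<forall>c\<in>set cs. successively succ_ok c"
    and outer: "successively (\<lambda>c d. succ_ok (last c) (hd d)) cs"
    using assms(2) successively_concat_iff[OF ne, of succ_ok] x by auto
  have "successively (\<lambda>c d. \<not> linked i (last c) (hd d)) cs"
    using block_decomp_blocks[of i x] by (simp add: block_decomp_def cs_def)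
  with outer have "successively (\<lambda>c d. succ_ok (last c) (hd d) \<and> \<not> linked i (last c) (hd d)) cs"
    by (simp add: successively_conv_nth)
  then have "successively (\<lambda>c d. succ_ok (last (block_flip i c)) (hd (block_flip i d))) cs"
  proof (rule successively_mono)
    fix c d assume cd: "c \<in> set cs" "d \<in> set cs"
      "succ_ok (last c) (hd d) \<and> \<not> linked i (last c) (hd d)"
    then have "last c \<in> set c" using ne by simp
    then have "last c \<in> set x" using cd(1) x by auto
    then have "barred (last c) \<longrightarrow> colr (last c) = 0" using assms(1) by blast
    then show "succ_ok (last (block_flip i c)) (hd (block_flip i d))"
      using succ_ok_compatible[OF _ _ _ last_compatible_block_flip hd_compatible_block_flip]
        cd ne lk by blast
  qed
  moreover have "\<forall>c\<in>set (map (block_flip i) cs). successively succ_ok c"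
    using inner ne lk successively_succ_ok_block_flip by auto
  ultimately show ?thesis
    unfolding word_flip_def cs_def[symmetric] using ne
    by (subst successively_concat_iff) (auto simp: successively_map)
qed

lemma succ_ok_last_hd_word_flip:
  assumes "good_cut i x" "barred (last x) \<longrightarrow> colr (last x) = 0" "succ_ok (last x) (hd x)"
  shows "succ_ok (last (word_flip i x)) (hd (word_flip i x))"
proof (cases "all_linked i x")
  case True
  then show ?thesis using assms succ_ok_last_hd_block_flip[of x i]
    by (simp add: good_cut_def word_flip_all_linked all_linked_def)
next
  case False
  then show ?thesis using assms succ_ok_compatible[OF _ _ _ last_compatible_word_flip hd_compatible_word_flip]
    by (simp add: good_cut_def)
qed

lemma valid_block_flip:
  assumes "1 \<le> i" "c \<noteq> []" "successively (linked i) c" "\<forall>a\<in>set c. valid_letter l a"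
  shows "\<forall>a\<in>set (block_flip i c). valid_letter l a"
proof
  fix a assume "a \<in> set (block_flip i c)"
  then obtain j where j: "j < length c" "a = block_flip i c ! j" by (auto simp: in_set_conv_nth)
  have v: "valid_letter l (c ! (length c - 1 - j))" "valid_letter l (c ! j)"
    "valid_letter l (c ! (length c - 1))"
    using assms(4) j(1) by auto
  have "1 \<le> flip i (absv (c ! (length c - 1 - j)))"
    using v(1) assms(1) by (simp add: valid_letter_def transpose_def)
  then have "1 \<le> absv a" using j nth_block_flip[OF j(1), of i] by (simp add: absv_def)
  moreover have "colr a < l" using v(2) j nth_block_flip[OF j(1), of i]
    by (simp add: valid_letter_def colr_def)
  moreover have "barred a \<longrightarrow> colr a = 0"
  proof (cases "j < length c - 1")
    case True
    have "colr (c ! j) = 0" using assms(2,3) by (cases rule: linked_block_cases) (use True in auto)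
    then show ?thesis using j nth_block_flip[OF j(1), of i] by (simp add: colr_def)
  next
    case False
    then have "j = length c - 1" using j by simp
    then show ?thesis using v(3) j nth_block_flip[OF j(1), of i]
      by (simp add: valid_letter_def colr_def barred_def)
  qed
  ultimately show "valid_letter l a" by (simp add: valid_letter_def)
qed

lemma valid_word_flip:
  assumes "1 \<le> i" "\<forall>a\<in>set x. valid_letter l a"
  shows "\<forall>a\<in>set (word_flip i x). valid_letter l a"
proof
  fix a assume "a \<in> set (word_flip i x)"
  then obtain c where c: "c \<in> set (blocks i x)" "a \<in> set (block_flip i c)"
    by (auto simp: word_flip_def)
  have "set c \<subseteq> set x" using c(1) concat_blocks[of i x] by (metis set_concat UN_upper)
  then show "valid_letter l a"
    using valid_block_flip[OF assms(1) blocks_nonempty[OF c(1)] blocks_linked[OF c(1)]] assms(2) c(2)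
    by blast
qed

lemma map_colr_all_zero: "\<forall>a\<in>set c. colr a = 0 \<Longrightarrow> map colr c = replicate (length c) 0"
  by (induction c) auto

lemma block_flip_append:
  assumes "u \<noteq> []" "w \<noteq> []" "\<forall>a\<in>set (u @ w). colr a = 0" "barred (last u) = barred (last w)"
  shows "block_flip i (u @ w) = block_flip i w @ block_flip i u"
proof (rule letter_list_eqI)
  show "map absv (block_flip i (u @ w)) = map absv (block_flip i w @ block_flip i u)"
    by (simp add: map_absv_block_flip)
  show "map colr (block_flip i (u @ w)) = map colr (block_flip i w @ block_flip i u)"
    using assms(3) map_colr_all_zero[of u] map_colr_all_zero[of w] map_colr_all_zero[of "u @ w"]
    by (simp add: map_colr_block_flip replicate_add[symmetric] add.commute)
  obtain us a where u: "u = us @ [a]" using assms(1) by (cases u rule: rev_cases) auto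
  obtain ws b where w: "w = ws @ [b]" using assms(2) by (cases w rule: rev_cases) auto
  have uw: "u @ w \<noteq> []" using assms(1) by simp
  show "map barred (block_flip i (u @ w)) = map barred (block_flip i w @ block_flip i u)"
    using assms(4)
    unfolding map_append map_barred_block_flip[OF uw] map_barred_block_flip[OF assms(1)]
      map_barred_block_flip[OF assms(2)]
    unfolding u w by (simp add: butlast_append)
qed

lemma concat_replicate_Suc_snoc: "concat (replicate (Suc n) xs) = concat (replicate n xs) @ xs"
  by (simp add: replicate_append_same[symmetric] del: replicate_append_same)

lemma word_flip_concat_replicate:
  assumes "good_cut i (concat (replicate d u))" "1 \<le> d"
  shows "word_flip i (concat (replicate d u)) = concat (replicate d (word_flip i u))"
proof -
  have u: "u \<noteq> []" using assms by (auto simp: good_cut_def)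
  have pow: "concat (replicate n u) \<noteq> []" "set (concat (replicate n u)) = set u"
    "last (concat (replicate n u)) = last u" "hd (concat (replicate n u)) = hd u"
    if n_pos: "1 \<le> n" for n
  proof -
    obtain m where n: "n = Suc m" using n_pos by (cases n) simp_all
    show "concat (replicate n u) \<noteq> []" "hd (concat (replicate n u)) = hd u"
      using u n by simp_all
    show "set (concat (replicate n u)) = set u" using n by (cases m) auto
    show "last (concat (replicate n u)) = last u"
      using u by (simp only: n concat_replicate_Suc_snoc) simp
  qed
  show ?thesis
  proof (cases "all_linked i u")
    case True
    have "block_flip i (concat (replicate n u)) = concat (replicate n (block_flip i u))"
      if "1 \<le> n" for n
      using that
    proof (induction n rule: nat_induct_at_least)
      case (Suc n)
      have "block_flip i (concat (replicate (Suc n) u))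
          = block_flip i (concat (replicate n u)) @ block_flip i u"
        using block_flip_append[OF u] pow[OF Suc.hyps] True by (simp add: all_linked_def)
      also have "\<dots> = concat (replicate (Suc n) (block_flip i u))"
        using Suc.IH by (simp only: concat_replicate_Suc_snoc)
      finally show ?case .
    qed simp
    moreover have "all_linked i (concat (replicate d u))"
      using True pow(2)[OF assms(2)] by (simp add: all_linked_def)
    ultimately show ?thesis
      using assms(2) u pow(1)[OF assms(2)] True by (simp add: word_flip_all_linked)
  next
    case False
    then have "\<not> all_linked i (concat (replicate d u))"
      using pow(2)[OF assms(2)] by (simp add: all_linked_def)
    then have "\<not> linked i (last u) (hd u)"
      using assms(1) pow(3,4)[OF assms(2)] by (simp add: good_cut_def)
    have "word_flip i (concat (replicate n u)) = concat (replicate n (word_flip i u))"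
      if "1 \<le> n" for n
      using that
    proof (induction n rule: nat_induct_at_least)
      case (Suc n)
      then show ?case
        using word_flip_append[OF u] pow[OF Suc.hyps] \<open>\<not> linked i (last u) (hd u)\<close>
        by simp
    qed simp
    then show ?thesis using assms(2) .
  qed
qed

lemma primitive_word_word_flip:
  assumes "good_cut i x" "primitive_word x"
  shows "primitive_word (word_flip i x)"
  unfolding primitive_word_def
proof (intro conjI notI)
  show "word_flip i x = [] \<Longrightarrow> False" using assms(1) by (simp add: good_cut_def)
  assume "\<exists>v d. 2 \<le> d \<and> word_flip i x = concat (replicate d v)"
  then obtain v d where vd: "2 \<le> d" "word_flip i x = concat (replicate d v)" by blast
  then have "good_cut i (concat (replicate d v))" using good_cut_word_flip[OF assms(1)] by simp
  moreover have "1 \<le> d" using vd(1) by simp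
  ultimately have "word_flip i (word_flip i x) = concat (replicate d (word_flip i v))"
    using word_flip_concat_replicate vd(2) by simp
  then have "x = concat (replicate d (word_flip i v))" by simp
  then show False using assms(2) vd(1) by (auto simp: primitive_word_def)
qed

lemma necklace_word_word_flip:
  assumes "1 \<le> i" "good_cut i x" "necklace_word l x"
  shows "necklace_word l (word_flip i x)"
proof -
  have x: "x \<noteq> []" using assms(2) by (simp add: good_cut_def)
  have nw: "primitive_word x" "\<forall>a\<in>set x. valid_letter l a" "successively succ_ok x"
    "succ_ok (last x) (hd x)" "length x = 1 \<longrightarrow> \<not> barred (hd x)"
    using assms(3) by (simp_all add: necklace_word_iff)
  then have bars: "\<forall>a\<in>set x. barred a \<longrightarrow> colr a = 0" by (simp add: valid_letter_def)
  have "length (word_flip i x) = 1 \<longrightarrow> \<not> barred (hd (word_flip i x))"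
  proof
    assume "length (word_flip i x) = 1"
    then obtain a where "x = [a]" by (auto simp: length_Suc_conv)
    then show "\<not> barred (hd (word_flip i x))"
      using nw(5) by (simp add: word_flip_def hd_block_flip barred_def)
  qed
  moreover have "primitive_word (word_flip i x)"
    using primitive_word_word_flip[OF assms(2) nw(1)] .
  moreover have "\<forall>a\<in>set (word_flip i x). valid_letter l a"
    using valid_word_flip[OF assms(1) nw(2)] .
  moreover have "successively succ_ok (word_flip i x)"
    using successively_succ_ok_word_flip[OF bars nw(3)] .
  moreover have "succ_ok (last (word_flip i x)) (hd (word_flip i x))"
    using succ_ok_last_hd_word_flip[OF assms(2) _ nw(4)] bars x by simp
  ultimately show ?thesis by (simp add: necklace_word_iff)
qed

lemma block_flip_rotate1:
  assumes "c \<noteq> []" "\<forall>a\<in>set c. colr a = 0"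
  shows "block_flip i c = rotate1 (block_flip i (rotate1 c))"
proof (rule letter_list_eqI)
  obtain a cs where c: "c = a # cs" using assms(1) by (cases c) auto
  show "map absv (block_flip i c) = map absv (rotate1 (block_flip i (rotate1 c)))"
    unfolding rotate1_map[symmetric] map_absv_block_flip c by simp
  show "map colr (block_flip i c) = map colr (rotate1 (block_flip i (rotate1 c)))"
    unfolding rotate1_map[symmetric] map_colr_block_flip
    using assms(2) map_colr_all_zero[of c] map_colr_all_zero[of "rotate1 c"] by simp
  show "map barred (block_flip i c) = map barred (rotate1 (block_flip i (rotate1 c)))"
  proof (cases cs rule: rev_cases)
    case Nil
    then show ?thesis using c by (simp add: block_flip_def)
  next
    case (snoc ys y)
    have "rotate1 c \<noteq> []" using assms(1) by simp
    then show ?thesis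
      unfolding rotate1_map[symmetric] map_barred_block_flip[OF assms(1)]
        map_barred_block_flip[OF \<open>rotate1 c \<noteq> []\<close>]
      using c snoc by (simp add: butlast_append)
  qed
qed

lemma block_flip_rotate:
  assumes "all_linked i c" "c \<noteq> []"
  shows "\<exists>j. block_flip i (rotate k c) = rotate j (block_flip i c)"
proof (induction k)
  case (Suc k)
  then obtain j where j: "block_flip i (rotate k c) = rotate j (block_flip i c)" by blast
  let ?d = "rotate k c"
  have "?d \<noteq> []" "\<forall>a\<in>set ?d. colr a = 0" using assms by (auto simp: all_linked_def)
  then have "rotate (length c - 1) (block_flip i ?d)
      = rotate (length c - 1) (rotate 1 (block_flip i (rotate1 ?d)))"
    by (simp add: block_flip_rotate1[of ?d])
  also have "\<dots> = rotate (length c - 1 + 1) (block_flip i (rotate1 ?d))"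
    by (rule rotate_rotate)
  also have "\<dots> = block_flip i (rotate1 ?d)" using assms(2) by simp
  finally have "block_flip i (rotate (Suc k) c) = rotate (length c - 1 + j) (block_flip i c)"
    using j by (simp add: rotate_rotate)
  then show ?case by blast
qed (auto intro: exI[of _ 0])

lemma word_flip_rotate:
  assumes "good_cut i x" "good_cut i (rotate k x)"
  shows "\<exists>j. word_flip i (rotate k x) = rotate j (word_flip i x)"
proof (cases "all_linked i x")
  case True
  moreover have "x \<noteq> []" using assms(1) by (simp add: good_cut_def)
  moreover have "all_linked i (rotate k x)" using True by (simp add: all_linked_def)
  ultimately show ?thesis using block_flip_rotate[of i x k] by (simp add: word_flip_all_linked)
next
  case False
  have x: "x \<noteq> []" and wrap: "\<not> linked i (last x) (hd x)"
    using assms(1) False by (auto simp: good_cut_def)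
  let ?p = "k mod length x"
  show ?thesis
  proof (cases "?p = 0")
    case True
    then show ?thesis by (intro exI[of _ 0]) simp
  next
    case False
    define u where "u = take ?p x"
    define v where "v = drop ?p x"
    have "?p < length x" using x by simp
    then have uv: "u \<noteq> []" "v \<noteq> []" using False by (auto simp: u_def v_def)
    have x_eq: "x = u @ v" by (simp add: u_def v_def)
    have rot_eq: "rotate k x = v @ u" by (simp add: rotate_drop_take u_def v_def)
    have "\<not> all_linked i (rotate k x)" using \<open>\<not> all_linked i x\<close> by (simp add: all_linked_def)
    then have "\<not> linked i (last u) (hd v)" using assms(2) rot_eq uv by (simp add: good_cut_def)
    moreover have "\<not> linked i (last v) (hd u)" using wrap uv x_eq by simp
    ultimately have "word_flip i (rotate k x) = word_flip i v @ word_flip i u"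
      "word_flip i x = word_flip i u @ word_flip i v"
      using rot_eq x_eq uv by (simp_all add: word_flip_append)
    then have "word_flip i (rotate k x) = rotate (length (word_flip i u)) (word_flip i x)"
      by (simp only: rotate_append)
    then show ?thesis by blast
  qed
qed

lemma good_cut_rotate_exists:
  assumes "x \<noteq> []"
  shows "\<exists>k. good_cut i (rotate k x)"
proof (cases "all_linked i x")
  case True
  then show ?thesis using assms by (intro exI[of _ 0]) (simp add: good_cut_def)
next
  case False
  then obtain j where j: "j < length x" "\<not> active i (x ! j) \<or> colr (x ! j) \<noteq> 0"
    by (auto simp: all_linked_def in_set_conv_nth)
  show ?thesis
  proof (cases "active i (x ! j)")
    case False
    then have "good_cut i (rotate j x)"
      using j assms by (simp add: good_cut_def linked_def hd_rotate_conv_nth)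
    then show ?thesis by blast
  next
    case True
    have "Suc j + (length x - 1) = j + length x" using j by simp
    then have "(Suc j + (length x - 1)) mod length x = j" using j by simp
    then have "last (rotate (Suc j) x) = x ! j"
      using assms by (simp add: last_conv_nth nth_rotate del: rotate_Suc)
    then have "good_cut i (rotate (Suc j) x)"
      using True j assms by (simp add: good_cut_def linked_def)
    then show ?thesis by blast
  qed
qed

section \<open>The flip on necklaces and ornaments\<close>

definition good_rotation :: "nat \<Rightarrow> letter list \<Rightarrow> letter list" where
  "good_rotation i x = rotate (SOME k. good_cut i (rotate k x)) x"

lemma good_cut_good_rotation: "x \<noteq> [] \<Longrightarrow> good_cut i (good_rotation i x)"
  unfolding good_rotation_def using good_cut_rotate_exists by (metis someI_ex)

lemma good_rotation_rotate: "\<exists>k. good_rotation i x = rotate k x"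
  by (auto simp: good_rotation_def)

lemma rep_necklace:
  assumes "is_necklace l N"
  shows "necklace_word l (rep N)" "rot_class (rep N) = N"
proof -
  obtain w where w: "necklace_word l w" "N = rot_class w"
    using assms by (auto simp: is_necklace_def)
  then have "rep N \<in> N" unfolding rep_def using self_in_rot_class by (metis someI_ex)
  then obtain k where "rep N = rotate k w" using w by (auto simp: rot_class_def)
  then show "necklace_word l (rep N)" "rot_class (rep N) = N"
    using w necklace_word_rotate rot_class_rotate by simp_all
qed

definition necklace_flip :: "nat \<Rightarrow> letter list set \<Rightarrow> letter list set" where
  "necklace_flip i N = rot_class (word_flip i (good_rotation i (rep N)))"

lemma necklace_flip:
  assumes "1 \<le> i" "is_necklace l N"
  shows "is_necklace l (necklace_flip i N)"
    and "\<exists>k. rep (necklace_flip i N) = rotate k (word_flip i (good_rotation i (rep N)))"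
proof -
  let ?g = "good_rotation i (rep N)"
  have nw: "necklace_word l (rep N)" using rep_necklace[OF assms(2)] by simp
  then have "good_cut i ?g" using good_cut_good_rotation necklace_word_nonempty by blast
  moreover have "necklace_word l ?g"
    using nw necklace_word_rotate good_rotation_rotate by metis
  ultimately have "necklace_word l (word_flip i ?g)"
    using necklace_word_word_flip[OF assms(1)] by blast
  then show neck: "is_necklace l (necklace_flip i N)"
    by (auto simp: is_necklace_def necklace_flip_def)
  have "rot_class (rep (necklace_flip i N)) = rot_class (word_flip i ?g)"
    using rep_necklace(2)[OF neck] by (simp add: necklace_flip_def)
  then have "rep (necklace_flip i N) \<in> rot_class (word_flip i ?g)"
    using self_in_rot_class by metis
  then show "\<exists>k. rep (necklace_flip i N) = rotate k (word_flip i ?g)"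
    by (auto simp: rot_class_def)
qed

lemma necklace_flip_necklace_flip:
  assumes "1 \<le> i" "is_necklace l N"
  shows "necklace_flip i (necklace_flip i N) = N"
proof -
  let ?g = "good_rotation i (rep N)"
  let ?N' = "necklace_flip i N"
  let ?g' = "good_rotation i (rep ?N')"
  have "good_cut i ?g"
    using good_cut_good_rotation necklace_word_nonempty rep_necklace(1)[OF assms(2)] by blast
  then have good: "good_cut i (word_flip i ?g)" by (rule good_cut_word_flip)
  have "good_cut i ?g'"
    using good_cut_good_rotation necklace_word_nonempty rep_necklace(1)[OF necklace_flip(1)[OF assms]]
    by blast
  moreover obtain k where "rep ?N' = rotate k (word_flip i ?g)" using necklace_flip(2)[OF assms] by blast
  moreover obtain k' where "?g' = rotate k' (rep ?N')" using good_rotation_rotate by blast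
  ultimately have "?g' = rotate (k' + k) (word_flip i ?g)" "good_cut i (rotate (k' + k) (word_flip i ?g))"
    by (simp_all add: rotate_rotate)
  then obtain j where "word_flip i ?g' = rotate j ?g"
    using word_flip_rotate[OF good] by fastforce
  then have "necklace_flip i ?N' = rot_class ?g" by (simp add: necklace_flip_def rot_class_rotate)
  also have "\<dots> = N"
    using good_rotation_rotate rot_class_rotate rep_necklace(2)[OF assms(2)] by metis
  finally show ?thesis .
qed

lemma rep_necklace_flip_stats:
  assumes "1 \<le> i" "is_necklace l N"
  shows "length (rep (necklace_flip i N)) = length (rep N)"
    "colvec l (rep (necklace_flip i N)) = colvec l (rep N)"
    "length (filter barred (rep (necklace_flip i N))) = length (filter barred (rep N))"
    "length (filter (\<lambda>a. absv a = u) (rep (necklace_flip i N)))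
       = length (filter (\<lambda>a. absv a = flip i u) (rep N))"
proof -
  obtain k k' where k: "rep (necklace_flip i N) = rotate k (word_flip i (good_rotation i (rep N)))"
    and k': "good_rotation i (rep N) = rotate k' (rep N)"
    using necklace_flip(2)[OF assms] good_rotation_rotate by blast
  have "colvec l (rotate m x) = colvec l x" for m x by (simp add: colvec_def length_filter_rotate)
  then show "length (rep (necklace_flip i N)) = length (rep N)"
    "colvec l (rep (necklace_flip i N)) = colvec l (rep N)"
    "length (filter barred (rep (necklace_flip i N))) = length (filter barred (rep N))"
    "length (filter (\<lambda>a. absv a = u) (rep (necklace_flip i N)))
       = length (filter (\<lambda>a. absv a = flip i u) (rep N))"
    unfolding k k' by (simp_all add: colvec_word_flip length_filter_rotate
        length_filter_barred_word_flip length_filter_absv_word_flip)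
qed

lemma ornament_necklace_flip:
  assumes "1 \<le> i" "ornament l Om"
  shows "ornament l (image_mset (necklace_flip i) Om)"
    and "cv_type l (image_mset (necklace_flip i) Om) = cv_type l Om"
    and "num_barred (image_mset (necklace_flip i) Om) = num_barred Om"
    and "content (image_mset (necklace_flip i) Om) = content Om \<circ> flip i"
    and "image_mset (necklace_flip i) (image_mset (necklace_flip i) Om) = Om"
proof -
  have N: "\<And>N. N \<in># Om \<Longrightarrow> is_necklace l N" using assms(2) by (simp add: ornament_def)
  note stats = rep_necklace_flip_stats[OF assms(1) N]
  show "ornament l (image_mset (necklace_flip i) Om)"
    using N necklace_flip(1)[OF assms(1)] by (auto simp: ornament_def)
  show "cv_type l (image_mset (necklace_flip i) Om) = cv_type l Om"
    unfolding cv_type_def image_mset.compositionality by (rule image_mset_cong) (simp add: stats)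
  show "num_barred (image_mset (necklace_flip i) Om) = num_barred Om"
    unfolding num_barred_def image_mset.compositionality
    by (rule arg_cong[where f = sum_mset], rule image_mset_cong) (simp add: stats)
  show "content (image_mset (necklace_flip i) Om) = content Om \<circ> flip i"
    unfolding content_def image_mset.compositionality comp_def fun_eq_iff
    by (intro allI arg_cong[where f = sum_mset] image_mset_cong) (simp add: stats)
  have "image_mset (necklace_flip i \<circ> necklace_flip i) Om = image_mset id Om"
    by (rule image_mset_cong) (simp add: necklace_flip_necklace_flip[OF assms(1) N])
  then show "image_mset (necklace_flip i) (image_mset (necklace_flip i) Om) = Om"
    by (simp add: image_mset.compositionality)
qed

lemma Q_coeff_comp_flip:
  assumes "1 \<le> i"
  shows "Q_coeff l lam k (\<alpha> \<circ> flip i) = Q_coeff l lam k \<alpha>"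
proof -
  define A where "A \<beta> = {Om. ornament l Om \<and> cv_type l Om = lam \<and> num_barred Om = k \<and> content Om = \<beta>}"
    for \<beta>
  have "bij_betw (image_mset (necklace_flip i)) (A \<alpha>) (A (\<alpha> \<circ> flip i))"
  proof (rule bij_betw_byWitness[where f' = "image_mset (necklace_flip i)"])
    have "(\<alpha> \<circ> flip i) \<circ> flip i = \<alpha>" by (simp add: fun_eq_iff)
    then show "image_mset (necklace_flip i) ` A (\<alpha> \<circ> flip i) \<subseteq> A \<alpha>"
      using ornament_necklace_flip[OF assms] by (auto simp: A_def)
  qed (use ornament_necklace_flip[OF assms] in \<open>auto simp: A_def\<close>)
  then show ?thesis unfolding Q_coeff_def A_def[symmetric] by (simp add: bij_betw_same_card)
qed

lemma finite_content_support: "finite {u. content Om u \<noteq> 0}"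
proof (rule finite_subset)
  show "{u. content Om u \<noteq> 0} \<subseteq> (\<Union>N\<in>set_mset Om. absv ` set (rep N))"
    by (auto simp: content_def filter_empty_conv)
qed simp

lemma Q_coeff_infinite_support:
  assumes "infinite {u. \<alpha> u \<noteq> 0}"
  shows "Q_coeff l lam k \<alpha> = 0"
proof -
  have "{Om. ornament l Om \<and> cv_type l Om = lam \<and> num_barred Om = k \<and> content Om = \<alpha>} = {}"
    using assms finite_content_support by blast
  then show ?thesis unfolding Q_coeff_def by (simp only: card.empty)
qed

section \<open>From adjacent transpositions to bijections\<close>

lemma comp_transpose_invariant_if_adjacent:
  fixes F :: "(nat \<Rightarrow> 'a) \<Rightarrow> 'b"
  assumes adjacent: "\<And>\<alpha> i. 1 \<le> i \<Longrightarrow> F (\<alpha> \<circ> transpose i (Suc i)) = F \<alpha>"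
    and "1 \<le> a" "1 \<le> b"
  shows "F (\<alpha> \<circ> transpose a b) = F \<alpha>"
proof -
  have shifted: "F (\<alpha> \<circ> transpose a (a + d)) = F \<alpha>" if "1 \<le> a" for a d \<alpha>
    using that
  proof (induction d arbitrary: a \<alpha>)
    case (Suc d)
    show ?case
    proof (cases "d = 0")
      case True
      then have "a + Suc d = Suc a" by simp
      then show ?thesis using adjacent[OF Suc.prems, of \<alpha>] by (simp only:)
    next
      case False
      let ?t = "transpose a (Suc a)"
      have "transpose a (a + Suc d) = ?t \<circ> transpose (Suc a) (Suc a + d) \<circ> ?t"
        using False by (simp add: transpose_comp_triple)
      then have "F (\<alpha> \<circ> transpose a (a + Suc d)) = F (((\<alpha> \<circ> ?t) \<circ> transpose (Suc a) (Suc a + d)) \<circ> ?t)"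
        by (simp add: comp_assoc)
      also have "\<dots> = F ((\<alpha> \<circ> ?t) \<circ> transpose (Suc a) (Suc a + d))"
        by (rule adjacent[OF Suc.prems])
      also have "\<dots> = F (\<alpha> \<circ> ?t)" by (rule Suc.IH) simp
      also have "\<dots> = F \<alpha>" by (rule adjacent[OF Suc.prems])
      finally show ?thesis .
    qed
  qed simp
  show ?thesis
  proof (cases "a \<le> b")
    case True
    then show ?thesis using shifted[OF assms(2), where d = "b - a"] by simp
  next
    case False
    then show ?thesis using shifted[OF assms(3), where d = "a - b"] by (simp add: transpose_commute)
  qed
qed

text \<open>A bijection moves only finitely many points of the support of \<open>\<alpha> \<circ> \<sigma>\<close>; composing
  with the transposition that fixes one of them reduces their number.\<close>
lemma comp_bij_invariant_if_transpose_invariant: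
  fixes F :: "('a \<Rightarrow> 'b::zero) \<Rightarrow> 'c"
  assumes transp: "\<And>\<alpha> a b. a \<in> S \<Longrightarrow> b \<in> S \<Longrightarrow> F (\<alpha> \<circ> transpose a b) = F \<alpha>"
    and "bij \<sigma>" "\<And>x. x \<notin> S \<Longrightarrow> \<sigma> x = x" "finite {x. \<alpha> (\<sigma> x) \<noteq> 0}"
  shows "F (\<alpha> \<circ> \<sigma>) = F \<alpha>"
proof -
  have "F (\<alpha> \<circ> \<sigma>) = F \<alpha>"
    if "bij \<sigma>" "\<forall>x. x \<notin> S \<longrightarrow> \<sigma> x = x" "finite {x. \<alpha> (\<sigma> x) \<noteq> 0}"
      "card {x. \<alpha> (\<sigma> x) \<noteq> 0 \<and> \<sigma> x \<noteq> x} = n" for n \<alpha> \<sigma>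
    using that
  proof (induction n arbitrary: \<alpha> \<sigma> rule: less_induct)
    case (less n)
    define D where "D = {x. \<alpha> (\<sigma> x) \<noteq> 0 \<and> \<sigma> x \<noteq> x}"
    have "finite D" using less.prems(3) by (rule finite_subset[rotated]) (auto simp: D_def)
    have inj: "\<sigma> x = \<sigma> y \<longleftrightarrow> x = y" for x y using less.prems(1) by (metis bij_pointE)
    show ?case
    proof (cases "D = {}")
      case True
      have "\<alpha> (\<sigma> x) = \<alpha> x" for x
      proof (cases "\<alpha> (\<sigma> x) = 0")
        case True
        obtain y where "x = \<sigma> y" using less.prems(1) by (metis bij_pointE)
        then show ?thesis using True \<open>D = {}\<close> by (auto simp: D_def)
      qed (use \<open>D = {}\<close> in \<open>auto simp: D_def\<close>)
      then show ?thesis by (simp add: comp_def)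
    next
      case False
      then obtain u where u: "u \<in> D" by blast
      define v where "v = \<sigma> u"
      have "v \<noteq> u" using u by (simp add: D_def v_def)
      then have "u \<in> S" "v \<in> S" using less.prems(2) inj[of v u] by (auto simp: v_def)
      define t where "t = transpose u v"
      have "(\<alpha> \<circ> t) \<circ> (t \<circ> \<sigma>) = \<alpha> \<circ> \<sigma>" by (simp add: t_def fun_eq_iff)
      then have "F (\<alpha> \<circ> \<sigma>) = F ((\<alpha> \<circ> t) \<circ> (t \<circ> \<sigma>))" by simp
      also have "\<dots> = F (\<alpha> \<circ> t)"
      proof (rule less.IH)
        have "{x. (\<alpha> \<circ> t) ((t \<circ> \<sigma>) x) \<noteq> 0 \<and> (t \<circ> \<sigma>) x \<noteq> x} \<subseteq> D - {u}"
        proof (intro subsetI CollectI, elim CollectE conjE)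
          fix x assume x: "(\<alpha> \<circ> t) ((t \<circ> \<sigma>) x) \<noteq> 0" "(t \<circ> \<sigma>) x \<noteq> x"
          have "x \<noteq> u" using x(2) by (auto simp: t_def v_def)
          moreover have "\<sigma> x \<noteq> x"
          proof
            assume "\<sigma> x = x"
            then have "x = v" using x(2) \<open>x \<noteq> u\<close> by (auto simp: t_def transpose_def split: if_splits)
            then show False using \<open>\<sigma> x = x\<close> \<open>v \<noteq> u\<close> inj[of v u] by (simp add: v_def)
          qed
          ultimately show "x \<in> D - {u}" using x(1) by (simp add: D_def t_def)
        qed
        then have "card {x. (\<alpha> \<circ> t) ((t \<circ> \<sigma>) x) \<noteq> 0 \<and> (t \<circ> \<sigma>) x \<noteq> x} \<le> card (D - {u})"
          using \<open>finite D\<close> by (intro card_mono) auto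
        also have "\<dots> < card D" using \<open>finite D\<close> u by (rule card_Diff1_less)
        finally have "card {x. (\<alpha> \<circ> t) ((t \<circ> \<sigma>) x) \<noteq> 0 \<and> (t \<circ> \<sigma>) x \<noteq> x} < card D" .
        then show "card {x. (\<alpha> \<circ> t) ((t \<circ> \<sigma>) x) \<noteq> 0 \<and> (t \<circ> \<sigma>) x \<noteq> x} < n"
          using less.prems(4) by (simp add: D_def)
        show "bij (t \<circ> \<sigma>)" using less.prems(1) by (simp add: t_def bij_comp)
        show "\<forall>x. x \<notin> S \<longrightarrow> (t \<circ> \<sigma>) x = x"
          using less.prems(2) \<open>u \<in> S\<close> \<open>v \<in> S\<close> by (auto simp: t_def transpose_def)
        show "finite {x. (\<alpha> \<circ> t) ((t \<circ> \<sigma>) x) \<noteq> 0}" using less.prems(3) by (simp add: t_def)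
      qed simp
      also have "\<dots> = F \<alpha>" unfolding t_def using \<open>u \<in> S\<close> \<open>v \<in> S\<close> by (rule transp)
      finally show ?thesis .
    qed
  qed
  from this[OF assms(2) _ assms(4) refl] show ?thesis using assms(3) by blast
qed

text \<open>The flip preserves the whole cv-cycle type.\<close>

theorem theorem2p5:
  fixes l k :: nat and lam :: "(nat \<times> nat list) multiset"
    and \<sigma> :: "nat \<Rightarrow> nat" and \<alpha> :: "nat \<Rightarrow> nat"
  assumes "l \<ge> 1"
    and "\<forall>p\<in>#lam. fst p \<ge> 1 \<and> length (snd p) = l - 1"
    and "bij \<sigma>" and "\<sigma> 0 = 0"
  shows "Q_coeff l lam k (\<alpha> \<circ> \<sigma>) = Q_coeff l lam k \<alpha>"
proof (cases "finite {u. \<alpha> u \<noteq> 0}")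
  case True
  have transp: "Q_coeff l lam k (\<beta> \<circ> transpose a b) = Q_coeff l lam k \<beta>"
    if "a \<in> {1..}" "b \<in> {1..}" for \<beta> a b
    by (rule comp_transpose_invariant_if_adjacent[where F = "Q_coeff l lam k"])
      (use that Q_coeff_comp_flip in auto)
  have fixed: "\<sigma> x = x" if "x \<notin> {1..}" for x
    using that assms(4) by (cases x) auto
  have "finite {x. \<alpha> (\<sigma> x) \<noteq> 0}"
    using finite_vimageI[OF True bij_is_inj[OF assms(3)]] by (simp add: vimage_def)
  from comp_bij_invariant_if_transpose_invariant[OF transp assms(3) fixed this]
  show ?thesis .
next
  case False
  then have "infinite (\<sigma> -` {u. \<alpha> u \<noteq> 0})"
    using finite_vimageD[of \<sigma>] bij_is_surj[OF assms(3)] by blast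
  then have "infinite {x. (\<alpha> \<circ> \<sigma>) x \<noteq> 0}" by (simp add: vimage_def)
  then show ?thesis
    using Q_coeff_infinite_support[of "\<alpha> \<circ> \<sigma>"] Q_coeff_infinite_support[OF False] by simp
qed

end
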